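(* Fix $0<p<1/2$ and let $\sigma=\sigma_p$ be the probability measure on $\partial\mathbb D$ defined by $\sigma(\partial\mathbb D)=1$ and, for every $n\ge0$ and every $I\in\mathcal D_n$ with left half $I_-\in\mathcal D_{n+1}$ and right half $I_+\in\mathcal D_{n+1}$: $\sigma(I_-)=p\,\sigma(I)$, $\sigma(I_+)=(1-p)\sigma(I)$ if $n$ is odd, and $\sigma(I_-)=(1-p)\sigma(I)$, $\sigma(I_+)=p\,\sigma(I)$ if $n$ is even. Let $u(z)=\int_{\partial\mathbb D}\frac{1-|z|^2}{|\xi-z|^2}d\sigma(\xi)$. Then there exists $c>0$ with $\frac{\sigma(I)}{|I|}\ge c\,u(z_I)$ for every arc $I\subset\partial\mathbb D$ if and only if $p>1/4$.
   Context: Identify $\partial\mathbb D$ with $[0,1)$ via $t\mapsto e^{2\pi it}$; $\mathcal D_n$ is the collection of dyadic arcs of generation $n$, the images of $[j2^{-n},(j+1)2^{-n})$, $0\le j<2^n$; "left half" means the image of the left half-interval. $m$ is normalized Lebesgue measure, $|I|=m(I)$, and $z_I=(1-|I|)\xi_I$ with $\xi_I$ the center of the arc $I$. *)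

theory Defs
  imports "HOL-Analysis.Analysis" "HOL-Probability.Probability"
begin

text \<open>The circle is identified with [0,1) via t \<mapsto> exp(2 pi i t).
  Measures on the circle are represented as Borel probability measures on the
  real line concentrated on [0,1).\<close>

definition dyadic :: "nat \<Rightarrow> nat \<Rightarrow> real set" where
  "dyadic n j = {real j / 2 ^ n ..< (real j + 1) / 2 ^ n}"

definition sigma_meas :: "real \<Rightarrow> real measure \<Rightarrow> bool" where
  "sigma_meas p M \<longleftrightarrow>
     sets M = sets borel \<and> prob_space M \<and> measure M {0..<1} = 1 \<and>
     (\<forall>n j. j < 2 ^ n \<longrightarrow>
        measure M (dyadic (Suc n) (2 * j)) =
          (if odd n then p else 1 - p) * measure M (dyadic n j) \<and>
        measure M (dyadic (Suc n) (2 * j + 1)) =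
          (if odd n then 1 - p else p) * measure M (dyadic n j))"

text \<open>Arc starting at angle parameter a with normalized length l (0 < l \<le> 1),
  as a subset of [0,1).\<close>

definition arc :: "real \<Rightarrow> real \<Rightarrow> real set" where
  "arc a l = {t \<in> {0..<1}. frac (t - a) < l}"

text \<open>z_I = (1 - |I|) xi_I, xi_I the centre of the arc.\<close>

definition zarc :: "real \<Rightarrow> real \<Rightarrow> complex" where
  "zarc a l = complex_of_real (1 - l) * cis (2 * pi * (a + l / 2))"

definition poisson :: "real measure \<Rightarrow> complex \<Rightarrow> real" where
  "poisson M z = (\<integral>t. (1 - (cmod z)\<^sup>2) / (cmod (cis (2 * pi * t) - z))\<^sup>2 \<partial>M)"

end

theory Submission
  imports Defs
begin

text \<open>
  Each half of a dyadic arc carries at least the fraction p of its mass, and since the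
  splitting rule alternates between generations, neighbouring dyadic arcs of the same
  generation have masses within the factor ((1 - p) / p)^2 of each other. Hence an arc of
  length 2^k |I| around a dyadic arc I has mass at most a constant times p^-k sigma(I).

  If p > 1/4: every arc I contains a dyadic arc of comparable length, and the Poisson kernel
  at z_I is at most 4^-k / |I| (up to a constant) at distance about 2^k |I| from I, so
  u(z_I) is bounded by a constant times the sum over k of (4 p)^-k sigma(I) / |I|.

  If p \<le> 1/4: let I_n be the dyadic arcs obtained by always descending into the half of
  relative mass p, so that sigma(I_n) = p^n. The Poisson kernel at z_(I_n) is at least
  4^m 2^-n / 41 on I_m for m \<le> n, hence u(z_(I_n)) is at least a constant times the sum
  over m \<le> n of (4 p)^m 2^-n \<ge> (n + 1) (2 p)^n = (n + 1) sigma(I_n) / |I_n|.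
\<close>

section \<open>Distance on the circle and the Poisson kernel\<close>

lemma ex_power2_bracket:
  fixes x :: real
  assumes "1 \<le> x"
  shows "\<exists>k. 2^k \<le> x \<and> x < 2^Suc k"
proof -
  define k where "k = nat \<lfloor>log 2 x\<rfloor>"
  have "\<lfloor>log 2 x\<rfloor> = int k"
    using assms by (simp add: k_def)
  then have "2 powr real k \<le> x \<and> x < 2 powr (real k + 1)"
    using floor_log_eq_powr_iff[of x 2 "int k"] assms by simp
  then show ?thesis
    using powr_realpow[of 2 k] powr_realpow[of 2 "Suc k"] by (auto simp: add.commute)
qed

definition circle_dist :: "real \<Rightarrow> real" where
  "circle_dist x = \<bar>x - real_of_int (round x)\<bar>"

lemma circle_dist_le: "circle_dist x \<le> \<bar>x - real_of_int m\<bar>"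
  unfolding circle_dist_def by (rule round_diff_minimal)

lemma circle_dist_le_half: "circle_dist x \<le> 1/2"
  unfolding circle_dist_def using of_int_round_abs_le[of x] by (simp add: abs_minus_commute)

lemma circle_dist_minus: "circle_dist (- x) = circle_dist x"
proof -
  have "circle_dist (- y) \<le> circle_dist y" for y
    using circle_dist_le[of "- y" "- round y"] by (simp add: circle_dist_def abs_minus_commute)
  from this[of x] this[of "- x"] show ?thesis by simp
qed

lemma circle_dist_triangle: "circle_dist (x + y) \<le> circle_dist x + circle_dist y"
  using circle_dist_le[of "x + y" "round x + round y"] abs_triangle_ineq[of "x - round x" "y - round y"]
  by (simp add: circle_dist_def algebra_simps)

lemma borel_measurable_circle_dist [measurable]: "circle_dist \<in> borel_measurable borel"
  unfolding circle_dist_def[abs_def] round_def by measurable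

lemma sin_ge_cubic:
  fixes x :: real
  assumes "0 \<le> x"
  shows "x - x^3/6 \<le> sin x"
proof -
  have "\<bar>sin x - x\<bar> \<le> x^3/6"
    using Maclaurin_sin_bound[of x 3] assms by (simp add: sin_coeff_def eval_nat_numeral)
  then show ?thesis unfolding abs_le_iff by linarith
qed

lemma circle_dist_le_abs_sin: "circle_dist x \<le> \<bar>sin (pi * x)\<bar>"
proof -
  define y where "y = x - real_of_int (round x)"
  have y: "\<bar>y\<bar> \<le> 1/2" "circle_dist x = \<bar>y\<bar>"
    using of_int_round_abs_le[of x] by (auto simp: y_def circle_dist_def abs_minus_commute)
  have "\<bar>sin (pi * x)\<bar> = \<bar>sin (pi * y + pi * real_of_int (round x))\<bar>"
    by (simp add: y_def algebra_simps)
  also have "\<dots> = \<bar>sin (pi * y)\<bar>"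
    by (simp add: sin_add sin_int_times_real cos_int_times_real abs_mult)
  also have "\<dots> = \<bar>sin (pi * \<bar>y\<bar>)\<bar>"
    by (cases "0 \<le> y") auto
  also have "\<dots> = sin (pi * \<bar>y\<bar>)"
    using sin_ge_zero[of "pi * \<bar>y\<bar>"] y(1) by simp
  finally have s: "\<bar>sin (pi * x)\<bar> = sin (pi * \<bar>y\<bar>)" .
  \<comment> \<open>for u = pi |y| \<le> 2 the cubic bound gives sin u \<ge> u / 3 \<ge> |y|\<close>
  define u where "u = pi * \<bar>y\<bar>"
  have "pi * \<bar>y\<bar> \<le> 4 * (1/2)" "3 * \<bar>y\<bar> \<le> pi * \<bar>y\<bar>"
    using y(1) pi_less_4 pi_gt3 by (intro mult_mono mult_right_mono; simp)+
  then have u: "0 \<le> u" "u \<le> 2" "\<bar>y\<bar> \<le> u / 3" by (auto simp: u_def)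
  then have "u * u \<le> 2 * 2" by (intro mult_mono) auto
  then have "u^3/6 \<le> u * 4 / 6"
    using mult_left_mono[of "u * u" 4 u] u(1) by (simp add: power3_eq_cube)
  then have "\<bar>y\<bar> \<le> pi * \<bar>y\<bar> - (pi * \<bar>y\<bar>)^3/6" using u by (simp add: u_def)
  then show ?thesis using s y sin_ge_cubic[of "pi * \<bar>y\<bar>"] by simp
qed

lemma norm_cis_diff_squared:
  "(cmod (cis A - complex_of_real r * cis B))^2 = (1 - r)^2 + 4 * r * (sin ((A - B)/2))^2"
proof -
  have "(cmod (cis A - complex_of_real r * cis B))^2 = (cos A - r * cos B)^2 + (sin A - r * sin B)^2"
    by (simp add: cmod_power2)
  also have "\<dots> = ((cos A)^2 + (sin A)^2) + r^2 * ((cos B)^2 + (sin B)^2)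
                    - 2 * r * (cos A * cos B + sin A * sin B)"
    by algebra
  also have "\<dots> = 1 + r^2 - 2 * r * cos (A - B)"
    by (simp only: sin_cos_squared_add2 cos_diff)
  also have "cos (A - B) = 1 - 2 * (sin ((A - B)/2))^2"
    by (metis cos_double_sin mult_2 field_sum_of_halves)
  finally show ?thesis by (simp add: power2_eq_square algebra_simps)
qed

text \<open>The Poisson kernel of the point (1 - l) e^(2 pi i \<theta>), evaluated at e^(2 pi i t).\<close>

definition poisson_kernel :: "real \<Rightarrow> real \<Rightarrow> real \<Rightarrow> real" where
  "poisson_kernel l \<theta> t = l * (2 - l) / (l^2 + 4 * (1 - l) * (sin (pi * (t - \<theta>)))^2)"

lemma borel_measurable_poisson_kernel [measurable]: "poisson_kernel l \<theta> \<in> borel_measurable borel"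
  unfolding poisson_kernel_def[abs_def] by measurable

lemma poisson_integrand_zarc:
  "(1 - (cmod (zarc a l))^2) / (cmod (cis (2*pi*t) - zarc a l))^2 = poisson_kernel l (a + l/2) t"
proof -
  have n: "(cmod (zarc a l))^2 = (1 - l)^2"
    unfolding zarc_def norm_mult norm_of_real norm_cis by (simp add: power2_abs)
  have d: "(cmod (cis (2*pi*t) - zarc a l))^2 = l^2 + 4 * (1 - l) * (sin (pi * (t - (a + l/2))))^2"
    using norm_cis_diff_squared[of "2*pi*t" "1 - l" "2*pi*(a + l/2)"]
    by (simp add: zarc_def right_diff_distrib[symmetric] mult.assoc)
  have "1 - (1 - l)^2 = l * (2 - l)"
    by (simp add: power2_eq_square algebra_simps)
  then show ?thesis
    unfolding n d poisson_kernel_def by simp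
qed

context
  fixes l :: real
  assumes l: "0 < l" "l \<le> 1"
begin

lemma poisson_kernel_denominator_pos: "0 < l^2 + 4 * (1 - l) * (sin (pi * (t - \<theta>)))^2"
  using l by (intro add_pos_nonneg) auto

lemma poisson_kernel_nonneg: "0 \<le> poisson_kernel l \<theta> t"
  using l by (simp add: poisson_kernel_def)

lemma poisson_kernel_le: "poisson_kernel l \<theta> t \<le> 2 / l"
proof -
  have "poisson_kernel l \<theta> t \<le> l * (2 - l) / l^2"
    unfolding poisson_kernel_def using l poisson_kernel_denominator_pos
    by (intro divide_left_mono) auto
  also have "\<dots> \<le> 2 / l"
    using l by (simp add: power2_eq_square divide_right_mono)
  finally show ?thesis .
qed

lemma poisson_kernel_ge: "l / (l^2 + 4 * pi^2 * (t - \<theta>)^2) \<le> poisson_kernel l \<theta> t"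
proof -
  let ?s = "(sin (pi * (t - \<theta>)))^2"
  have "?s \<le> (pi * (t - \<theta>))^2"
    using abs_sin_x_le_abs_x[of "pi * (t - \<theta>)"] by (metis abs_ge_zero power2_abs power_mono)
  moreover have "(1 - l) * ?s \<le> ?s"
    using l mult_right_mono[of "1 - l" 1 ?s] by simp
  ultimately have "(1 - l) * ?s \<le> pi^2 * (t - \<theta>)^2"
    by (simp add: power_mult_distrib)
  then have "4 * (1 - l) * ?s \<le> 4 * pi^2 * (t - \<theta>)^2"
    using mult_left_mono[of _ _ 4] by (simp only: mult.assoc)
  then show ?thesis
    unfolding poisson_kernel_def using l poisson_kernel_denominator_pos
    by (intro frac_le) auto
qed

end

lemma poisson_kernel_le_circle_dist:
  assumes "0 < l" "l \<le> 1/2" "0 < circle_dist (t - \<theta>)"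
  shows "poisson_kernel l \<theta> t \<le> l / (circle_dist (t - \<theta>))^2"
proof -
  let ?d = "circle_dist (t - \<theta>)"
  have "?d^2 \<le> (sin (pi * (t - \<theta>)))^2"
    using circle_dist_le_abs_sin[of "t - \<theta>"] assms(3) by (metis abs_le_square_iff abs_of_pos)
  moreover have "2 * (sin (pi * (t - \<theta>)))^2 \<le> 4 * (1 - l) * (sin (pi * (t - \<theta>)))^2"
    using assms by (intro mult_right_mono) auto
  ultimately have "2 * ?d^2 \<le> l^2 + 4 * (1 - l) * (sin (pi * (t - \<theta>)))^2"
    using zero_le_power2[of l] by linarith
  then have "poisson_kernel l \<theta> t \<le> (2 * l) / (2 * ?d^2)"
    unfolding poisson_kernel_def using assms by (intro frac_le) auto
  then show ?thesis by simp
qed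

lemma poisson_kernel_le_annulus:
  assumes l: "0 < l" "l \<le> 1" and N: "1/2 < 2^N * l"
  obtains k where "k < Suc N"
    "poisson_kernel l \<theta> t \<le> 4 / (4^k * l) * indicator {t. circle_dist (t - \<theta>) < 2^k * l} t"
proof (cases "circle_dist (t - \<theta>) < l")
  case True
  have "poisson_kernel l \<theta> t \<le> 2 / l" by (rule poisson_kernel_le[OF l])
  also have "\<dots> \<le> 4 / (4^0 * l) * indicator {t. circle_dist (t - \<theta>) < 2^0 * l} t"
    using True l by (simp add: divide_right_mono)
  finally show ?thesis using that by blast
next
  case False
  define d where "d = circle_dist (t - \<theta>)"
  obtain k where "2^k \<le> d / l" "d / l < 2^Suc k"
    using ex_power2_bracket[of "d / l"] False l by (auto simp: d_def)
  then have k: "2^k * l \<le> d" "d < 2^Suc k * l" using l by (simp_all add: field_simps)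
  have d: "d \<le> 1/2" unfolding d_def by (rule circle_dist_le_half)
  then have "2^k * l < 2^N * l" using k(1) N by linarith
  then have "k < N" using l by simp
  have "1 * l \<le> 2^k * l" using l by (intro mult_right_mono) simp_all
  then have "l \<le> 1/2" "0 < d" using k(1) d l by linarith+
  then have "poisson_kernel l \<theta> t \<le> l / d^2"
    using poisson_kernel_le_circle_dist[of l t \<theta>] l unfolding d_def by blast
  also have "\<dots> \<le> l / (2^k * l)^2"
    using k l \<open>0 < d\<close> by (intro divide_left_mono power_mono mult_pos_pos) auto
  also have "\<dots> = 4 / (4^Suc k * l) * indicator {t. circle_dist (t - \<theta>) < 2^Suc k * l} t"
  proof -
    have "(2::real)^k * 2^k = 4^k" by (simp flip: power_mult_distrib)
    then show ?thesis using k l by (simp add: d_def power2_eq_square field_simps)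
  qed
  finally show ?thesis using that \<open>k < N\<close> by blast
qed

lemma poisson_kernel_le_annuli:
  assumes l: "0 < l" "l \<le> 1" and N: "1/2 < 2^N * l"
  shows "poisson_kernel l \<theta> t \<le> (\<Sum>k<Suc N. 4 / (4^k * l) * indicator {t. circle_dist (t - \<theta>) < 2^k * l} t)"
proof -
  obtain k where "k < Suc N"
    "poisson_kernel l \<theta> t \<le> 4 / (4^k * l) * indicator {t. circle_dist (t - \<theta>) < 2^k * l} t"
    using poisson_kernel_le_annulus[OF l N] .
  moreover have "4 / (4^k * l) * indicator {t. circle_dist (t - \<theta>) < 2^k * l} t
      \<le> (\<Sum>k<Suc N. 4 / (4^k * l) * indicator {t. circle_dist (t - \<theta>) < 2^k * l} t)"
    using \<open>k < Suc N\<close> l by (intro member_le_sum) auto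
  ultimately show ?thesis by linarith
qed

section \<open>Dyadic arcs\<close>

lemma real_plus_one_le_power2: "j < 2^n \<Longrightarrow> real j + 1 \<le> 2^n"
  by (metis Suc_leI of_nat_Suc of_nat_le_iff of_nat_numeral of_nat_power add.commute)

lemma sets_borel_dyadic [measurable]: "dyadic n j \<in> sets borel"
  by (simp add: dyadic_def)

lemma mem_dyadic_iff_floor: "t \<in> dyadic n j \<longleftrightarrow> \<lfloor>2^n * t\<rfloor> = int j"
  unfolding dyadic_def floor_eq_iff by (auto simp: field_simps)

lemma dyadic_subset_unit: "j < 2^n \<Longrightarrow> dyadic n j \<subseteq> {0..<1}"
  using real_plus_one_le_power2[of j n] unfolding dyadic_def by (auto simp: field_simps)

lemma dyadic_floor_index:
  assumes "0 \<le> t" "t < 1"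
  shows "nat \<lfloor>2^n * t\<rfloor> < 2^n" "t \<in> dyadic n (nat \<lfloor>2^n * t\<rfloor>)"
  using assms by (auto simp: mem_dyadic_iff_floor nat_less_iff floor_less_iff)

lemma dyadic_subset_ancestor: "dyadic (n + s) j \<subseteq> dyadic n (j div 2^s)"
proof
  fix t assume "t \<in> dyadic (n + s) j"
  then have "\<lfloor>2^(n + s) * t\<rfloor> = int j" by (simp add: mem_dyadic_iff_floor)
  moreover have "\<lfloor>2^(n + s) * t / 2^s\<rfloor> = \<lfloor>2^(n + s) * t\<rfloor> div 2^s"
    using floor_divide_real_eq_div[of "2^s" "2^(n + s) * t"] by simp
  ultimately have "\<lfloor>2^n * t\<rfloor> = int j div 2^s"
    by (simp add: power_add)
  then show "t \<in> dyadic n (j div 2^s)" by (simp add: mem_dyadic_iff_floor zdiv_int)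
qed

lemma arc_eq_interval:
  assumes "0 \<le> a" "0 < l" "a + l \<le> 1"
  shows "arc a l = {a..<a + l}"
proof (intro set_eqI iffI)
  fix t assume t: "t \<in> arc a l"
  then have "0 \<le> t" "t < 1" "frac (t - a) < l" by (auto simp: arc_def)
  moreover have "frac (t - a) = t - a + 1" if "t < a"
    using that assms \<open>0 \<le> t\<close> by (subst frac_unique_iff) auto
  ultimately show "t \<in> {a..<a + l}" using assms by (cases "a \<le> t") (auto simp: frac_eq)
next
  fix t assume "t \<in> {a..<a + l}"
  then show "t \<in> arc a l" using assms by (auto simp: arc_def frac_eq)
qed

lemma arc_dyadic: "j < 2^n \<Longrightarrow> arc (real j / 2^n) (1 / 2^n) = dyadic n j"
  using real_plus_one_le_power2[of j n]
  by (subst arc_eq_interval) (auto simp: dyadic_def field_simps)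

lemma interval_subset_arc:
  assumes "x - a - \<delta> \<in> \<int>" "0 \<le> \<delta>" "\<delta> + h \<le> l" "l \<le> 1"
  shows "{x..<x + h} \<inter> {0..<1} \<subseteq> arc a l"
proof
  fix t assume t: "t \<in> {x..<x + h} \<inter> {0..<1}"
  have "t - a - (t - x + \<delta>) \<in> \<int>" using assms(1) by (simp add: algebra_simps)
  then have "frac (t - a) = t - x + \<delta>"
    using t assms by (subst frac_unique_iff) auto
  then show "t \<in> arc a l" using t assms by (auto simp: arc_def)
qed

lemma ex_dyadic_point_above:
  obtains J \<delta> where "J < 2^G" "0 \<le> \<delta>" "\<delta> < 1 / 2^G" "real J / 2^G - a - \<delta> \<in> \<int>"
proof -
  define c where "c = \<lceil>2^G * frac a\<rceil>"
  define \<delta> where "\<delta> = c / 2^G - frac a"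
  have "0 \<le> 2^G * frac a" by simp
  then have c: "0 \<le> c" "c < 2^G * frac a + 1" "2^G * frac a \<le> c"
    using ceiling_correct[of "2^G * frac a"] unfolding c_def by linarith+
  have "\<delta> = (c - 2^G * frac a) / 2^G" by (simp add: \<delta>_def field_simps)
  then have \<delta>: "0 \<le> \<delta>" "\<delta> < 1 / 2^G"
    using c by (simp_all add: divide_strict_right_mono)
  have "int (nat c mod 2^G) = c mod 2^G" using c(1) by (simp add: zmod_int)
  then have "real (nat c mod 2^G) = of_int (c - 2^G * (c div 2^G))"
    by (metis minus_mult_div_eq_mod of_int_of_nat_eq)
  then have "real (nat c mod 2^G) / 2^G - a - \<delta> = of_int (- (c div 2^G) - \<lfloor>a\<rfloor>)"
    by (simp add: \<delta>_def frac_def field_simps)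
  then show ?thesis using that[of "nat c mod 2^G" \<delta>] \<delta> by simp
qed

lemma ex_dyadic_subset_arc:
  assumes "0 < l" "l \<le> 1"
  obtains G J where "J < 2^G" "l \<le> 4 / 2^G"
    "circle_dist (real J / 2^G - (a + l/2)) \<le> l/2" "dyadic G J \<subseteq> arc a l"
proof -
  obtain G where "2^G \<le> 4/l" "4/l < 2^Suc G"
    using ex_power2_bracket[of "4/l"] assms by auto
  then have l: "l \<le> 4 / 2^G" "2 / 2^G < l"
    using assms by (auto simp: field_simps)
  obtain J \<delta> where J: "J < 2^G" and \<delta>: "0 \<le> \<delta>" "\<delta> < 1 / 2^G"
    and int: "real J / 2^G - a - \<delta> \<in> \<int>"
    using ex_dyadic_point_above .
  from int obtain m where m: "real J / 2^G - a - \<delta> = of_int m" by (auto elim: Ints_cases)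
  have "circle_dist (real J / 2^G - (a + l/2)) \<le> \<bar>\<delta> - l/2\<bar>"
    using circle_dist_le[of "real J / 2^G - (a + l/2)" m] m by simp
  also have "\<dots> \<le> l/2" using \<delta> l by (simp add: abs_le_iff)
  finally have "circle_dist (real J / 2^G - (a + l/2)) \<le> l/2" .
  moreover have "dyadic G J \<subseteq> {real J / 2^G..<real J / 2^G + 1 / 2^G} \<inter> {0..<1}"
    using dyadic_subset_unit[OF J] by (auto simp: dyadic_def add_divide_distrib)
  moreover have "\<dots> \<subseteq> arc a l"
    using int \<delta> l assms by (intro interval_subset_arc) auto
  ultimately show ?thesis using that J l by blast
qed

lemma circle_ball_subset_dyadic_scale:
  assumes "circle_dist (x - \<theta>) \<le> l/2" "0 < l" "l \<le> 4 / 2^(g + (k + 3))"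
  shows "{t. circle_dist (t - \<theta>) < 2^k * l} \<subseteq> {t. circle_dist (t - x) < 1 / 2^g}"
proof safe
  fix t assume t: "circle_dist (t - \<theta>) < 2^k * l"
  have "1 * l \<le> 2^k * l" using assms(2) by (intro mult_right_mono) simp_all
  have "circle_dist (t - x) \<le> circle_dist (t - \<theta>) + circle_dist (x - \<theta>)"
    using circle_dist_triangle[of "t - \<theta>" "\<theta> - x"] circle_dist_minus[of "\<theta> - x"] by simp
  also have "\<dots> < 2^k * l + 2^k * l"
    using t assms(1,2) \<open>1 * l \<le> 2^k * l\<close> by linarith
  also have "\<dots> = 2^(k + 1) * l" by simp
  also have "\<dots> \<le> 2^(k + 1) * (4 / 2^(g + (k + 3)))" using assms by (intro mult_left_mono) auto
  also have "\<dots> = 1 / 2^g" by (simp add: power_add field_simps)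
  finally show "circle_dist (t - x) < 1 / 2^g" .
qed

lemma circle_ball_subset_dyadic_neighbours:
  fixes x :: real and g :: nat
  assumes "0 \<le> x" "x < 1"
  defines "X \<equiv> nat \<lfloor>2^g * x\<rfloor>"
  shows "{t. circle_dist (t - x) < 1 / 2^g} \<inter> {0..<1} \<subseteq>
           dyadic g X \<union> dyadic g ((X + 1) mod 2^g) \<union> dyadic g ((X + 2^g - 1) mod 2^g)"
proof
  fix t assume t: "t \<in> {t. circle_dist (t - x) < 1 / 2^g} \<inter> {0..<1}"
  define T where "T = nat \<lfloor>2^g * t\<rfloor>"
  define N :: int where "N = 2^g"
  define d where "d = int T - int X - N * round (t - x)"
  have T: "T < 2^g" "t \<in> dyadic g T" "X < 2^g" "x \<in> dyadic g X"
    using t assms dyadic_floor_index by (auto simp: T_def X_def)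
  then have floors: "\<lfloor>2^g * t\<rfloor> = int T" "\<lfloor>2^g * x\<rfloor> = int X"
    by (simp_all add: mem_dyadic_iff_floor)
  have "\<bar>2^g * t - 2^g * x - of_int N * of_int (round (t - x))\<bar>
          = \<bar>2^g * (t - x - of_int (round (t - x)))\<bar>"
    by (simp add: N_def algebra_simps)
  also have "\<dots> = 2^g * circle_dist (t - x)"
    by (simp add: abs_mult circle_dist_def)
  also have "\<dots> < 1"
    using t by (simp add: field_simps)
  finally have "\<bar>2^g * t - 2^g * x - of_int N * of_int (round (t - x))\<bar> < 1" .
  then have "\<bar>of_int d :: real\<bar> < 2"
    using floors floor_le_iff[of "2^g * t"] by (simp add: d_def abs_less_iff) linarith
  then have d: "d = -1 \<or> d = 0 \<or> d = 1" by linarith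
  have "int T = int T mod N" using T by (simp add: N_def)
  also have "\<dots> = (int X + d) mod N" by (simp add: d_def mod_eq_dvd_iff)
  finally have TX: "int T = (int X + d) mod N" .
  have "T = X \<or> T = (X + 1) mod 2^g \<or> T = (X + 2^g - 1) mod 2^g"
  proof -
    have "int ((X + 2^g - 1) mod 2^g) = (int X - 1 + N) mod N"
      by (simp add: N_def zmod_int of_nat_diff add.commute add_increasing algebra_simps)
    moreover have "int ((X + 1) mod 2^g) = (int X + 1) mod N"
      by (simp add: N_def zmod_int add.commute)
    ultimately show ?thesis
      using d TX T by (auto simp: N_def)
  qed
  then show "t \<in> dyadic g X \<union> dyadic g ((X + 1) mod 2^g) \<union> dyadic g ((X + 2^g - 1) mod 2^g)"
    using T by auto
qed

text \<open>The branch of dyadic arcs that always descends into the half of relative mass p.\<close>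

fun light_branch :: "nat \<Rightarrow> nat" where
  "light_branch 0 = 0"
| "light_branch (Suc n) = 2 * light_branch n + (if odd n then 0 else 1)"

lemma light_branch_less: "light_branch n < 2^n"
  by (induction n) auto

lemma light_branch_div: "light_branch (m + s) div 2^s = light_branch m"
proof (induction s)
  case (Suc s)
  have "light_branch (m + Suc s) div 2^Suc s = light_branch (m + s) div 2^s"
    by (simp add: div_mult2_eq)
  then show ?case using Suc by simp
qed simp

lemma light_branch_ancestor: "m \<le> n \<Longrightarrow> light_branch n div 2^(n - m) = light_branch m"
  using light_branch_div[of m "n - m"] by simp

lemma poisson_kernel_ge_on_ancestor:
  assumes "m \<le> n" "t \<in> dyadic m (j div 2^(n - m))"
  shows "4^m / (41 * 2^n) \<le> poisson_kernel (1 / 2^n) (real j / 2^n + (1 / 2^n) / 2) t"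
proof -
  define \<theta> where "\<theta> = real j / 2^n + (1 / 2^n) / 2"
  have "\<theta> \<in> dyadic n j" by (simp add: \<theta>_def dyadic_def field_simps)
  then have "\<theta> \<in> dyadic m (j div 2^(n - m))"
    using dyadic_subset_ancestor[of m "n - m" j] assms(1) by auto
  with assms(2) have "\<bar>2^m * t - 2^m * \<theta>\<bar> < 1"
    by (auto simp: mem_dyadic_iff_floor floor_eq_iff)
  also have "\<bar>2^m * t - 2^m * \<theta>\<bar> = 2^m * \<bar>t - \<theta>\<bar>"
    by (simp add: abs_mult flip: right_diff_distrib)
  finally have "\<bar>t - \<theta>\<bar> \<le> 1 / 2^m" by (simp add: field_simps)
  have q: "(1 / 2^m)^2 = (1 / 4^m :: real)"
    by (simp add: power_divide power2_eq_square flip: power_mult_distrib)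
  from \<open>\<bar>t - \<theta>\<bar> \<le> 1 / 2^m\<close> have "(t - \<theta>)^2 \<le> 1 / 4^m"
    unfolding q[symmetric] by (metis abs_ge_zero power2_abs power_mono)
  moreover have "pi^2 \<le> 10"
    using pi_approx mult_mono[of pi "3.15" pi "3.15"] by (simp add: power2_eq_square)
  ultimately have "pi^2 * (t - \<theta>)^2 \<le> 10 * (1 / 4^m)"
    by (intro mult_mono) auto
  moreover have "(1 / 2^n)^2 \<le> (1 / 4^m :: real)"
    unfolding q[symmetric] using assms(1) by (intro power_mono) (simp_all add: field_simps)
  ultimately have "(1 / 2^n)^2 + 4 * pi^2 * (t - \<theta>)^2 \<le> 41 / 4^m"
    by (simp add: mult.assoc)
  moreover have "0 < (1 / 2^n)^2 + 4 * pi^2 * (t - \<theta>)^2"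
    by (intro add_pos_nonneg) auto
  ultimately have "(1 / 2^n) / (41 / 4^m) \<le> (1 / 2^n) / ((1 / 2^n)^2 + 4 * pi^2 * (t - \<theta>)^2)"
    by (intro divide_left_mono mult_pos_pos) auto
  also have "\<dots> \<le> poisson_kernel (1 / 2^n) \<theta> t"
    by (rule poisson_kernel_ge) auto
  finally show ?thesis by (simp add: \<theta>_def field_simps)
qed

section \<open>Masses of dyadic arcs\<close>

locale sigma_p_measure =
  fixes p :: real and M :: "real measure"
  assumes p_pos: "0 < p" and p_less_half: "p < 1/2" and sigma: "sigma_meas p M"
begin

lemma sets_M [measurable_cong, simp]: "sets M = sets borel"
  using sigma by (simp add: sigma_meas_def)

lemma space_M [simp]: "space M = UNIV"
  using sets_eq_imp_space_eq[OF sets_M] by simp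

sublocale prob_space M
  using sigma by (simp add: sigma_meas_def)

lemma measure_Int_unit:
  assumes "A \<in> sets borel"
  shows "measure M (A \<inter> {0..<1}) = measure M A"
proof -
  have "measure M (space M - {0..<1}) = 0"
    using prob_compl[of "{0..<1}"] sigma by (simp add: sigma_meas_def)
  then have "UNIV - {0..<1} \<in> null_sets M"
    by (auto simp: emeasure_eq_measure)
  moreover have "A \<inter> {0..<1} = A - (UNIV - {0..<1})" by auto
  ultimately show ?thesis
    using assms by (simp add: measure_Diff_null_set)
qed

definition mass :: "nat \<Rightarrow> nat \<Rightarrow> real" where
  "mass n j = measure M (dyadic n j)"

lemma mass_nonneg: "0 \<le> mass n j"
  by (simp add: mass_def)

lemma mass_root: "mass 0 0 = 1"
  using sigma by (simp add: sigma_meas_def mass_def dyadic_def)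

lemma mass_child:
  assumes "j < 2^Suc n"
  shows "mass (Suc n) j = (if odd n \<longleftrightarrow> even j then p else 1 - p) * mass n (j div 2)"
proof (cases "even j")
  case True
  then obtain i where "j = 2 * i" by blast
  with assms show ?thesis using sigma unfolding sigma_meas_def mass_def by auto
next
  case False
  then obtain i where "j = 2 * i + 1" by (blast elim: oddE)
  with assms show ?thesis using sigma unfolding sigma_meas_def mass_def by auto
qed

lemma mass_child_ge:
  assumes "j < 2^Suc n"
  shows "p * mass n (j div 2) \<le> mass (Suc n) j"
  using mass_child[OF assms] p_less_half mass_nonneg[of n "j div 2"]
  by (auto intro: mult_right_mono)

lemma mass_descendant_ge: "j < 2^(n + s) \<Longrightarrow> p^s * mass n (j div 2^s) \<le> mass (n + s) j"
proof (induction s arbitrary: j)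
  case (Suc s)
  have "j div 2 < 2^(n + s)" using Suc.prems by (simp add: less_mult_imp_div_less)
  then have "p^s * mass n (j div 2 div 2^s) \<le> mass (n + s) (j div 2)" by (rule Suc.IH)
  then have "p * (p^s * mass n (j div 2^Suc s)) \<le> p * mass (n + s) (j div 2)"
    using p_pos by (simp add: div_mult2_eq)
  also have "\<dots> \<le> mass (n + Suc s) j"
    using mass_child_ge[of j "n + s"] Suc.prems by simp
  finally show ?case by simp
qed simp

lemma mass_ge: "j < 2^n \<Longrightarrow> p^n \<le> mass n j"
  using mass_descendant_ge[of j 0 n] mass_root by simp

text \<open>Here x and y are the masses of a dyadic arc of generation n and of its right neighbour
  on the circle.\<close>

definition adjacent_bounds :: "nat \<Rightarrow> real \<Rightarrow> real \<Rightarrow> bool" where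
  "adjacent_bounds n x y \<longleftrightarrow>
     (if odd n then p * x \<le> (1 - p) * y \<and> p^2 * y \<le> (1 - p)^2 * x
      else p^2 * x \<le> (1 - p)^2 * y \<and> p * y \<le> (1 - p) * x)"

lemma adjacent_bounds_siblings:
  assumes "i < 2^n"
  shows "adjacent_bounds (Suc n) (mass (Suc n) (2 * i)) (mass (Suc n) (2 * i + 1))"
proof -
  let ?m = "mass n i"
  have "p^2 * (p * ?m) \<le> (1 - p)^2 * ((1 - p) * ?m)"
    using p_pos p_less_half mass_nonneg[of n i] by (intro mult_mono mult_right_mono power_mono) auto
  then show ?thesis
    using mass_child[of "2 * i" n] mass_child[of "2 * i + 1" n] assms
    by (simp add: adjacent_bounds_def mult_ac)
qed

lemma adjacent_bounds_cousins:
  assumes "i < 2^n" "i' < 2^n" and bounds: "adjacent_bounds n (mass n i) (mass n i')"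
  shows "adjacent_bounds (Suc n) (mass (Suc n) (2 * i + 1)) (mass (Suc n) (2 * i'))"
proof -
  let ?m = "mass n i" and ?m' = "mass n i'"
  have q: "0 \<le> p * (1 - p)" using p_pos p_less_half by simp
  have children: "mass (Suc n) (2 * i + 1) = (if odd n then 1 - p else p) * ?m"
    "mass (Suc n) (2 * i') = (if odd n then p else 1 - p) * ?m'"
    using mass_child[of "2 * i + 1" n] mass_child[of "2 * i'" n] assms(1,2) by simp_all
  show ?thesis
  proof (cases "odd n")
    case True
    with bounds have "p * ?m \<le> (1 - p) * ?m'" "p^2 * ?m' \<le> (1 - p)^2 * ?m"
      by (simp_all add: adjacent_bounds_def)
    moreover from this(1) q have "p * (1 - p) * (p * ?m) \<le> p * (1 - p) * ((1 - p) * ?m')"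
      by (rule mult_left_mono)
    ultimately show ?thesis using True children
      by (simp add: adjacent_bounds_def power2_eq_square mult_ac)
  next
    case False
    with bounds have "p^2 * ?m \<le> (1 - p)^2 * ?m'" "p * ?m' \<le> (1 - p) * ?m"
      by (simp_all add: adjacent_bounds_def)
    moreover from this(2) q have "p * (1 - p) * (p * ?m') \<le> p * (1 - p) * ((1 - p) * ?m)"
      by (rule mult_left_mono)
    ultimately show ?thesis using False children
      by (simp add: adjacent_bounds_def power2_eq_square mult_ac)
  qed
qed

lemma adjacent_bounds_cyclic: "j < 2^n \<Longrightarrow> adjacent_bounds n (mass n j) (mass n ((j + 1) mod 2^n))"
proof (induction n arbitrary: j)
  case 0
  have "p^2 * mass 0 0 \<le> (1 - p)^2 * mass 0 0" "p * mass 0 0 \<le> (1 - p) * mass 0 0"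
    using p_pos p_less_half mass_nonneg[of 0 0] by (intro mult_right_mono power_mono; simp)+
  with 0 show ?case by (simp add: adjacent_bounds_def)
next
  case (Suc n)
  show ?case
  proof (cases "even j")
    case True
    then obtain i where "j = 2 * i" by blast
    with Suc.prems show ?thesis using adjacent_bounds_siblings[of i n] by simp
  next
    case False
    then obtain i where j: "j = 2 * i + 1" by (blast elim: oddE)
    then have i: "i < 2^n" using Suc.prems by simp
    have "(j + 1) mod 2^Suc n = 2 * ((i + 1) mod 2^n)" by (simp add: j mult_mod_right)
    then show ?thesis
      using adjacent_bounds_cousins[OF i _ Suc.IH[OF i]] j by simp
  qed
qed

lemma square_weights_le:
  assumes "p * x \<le> (1 - p) * y" "0 \<le> y"
  shows "p^2 * x \<le> (1 - p)^2 * y"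
proof -
  have "p * (p * x) \<le> p * ((1 - p) * y)" using assms p_pos by (intro mult_left_mono) auto
  also have "\<dots> \<le> (1 - p) * ((1 - p) * y)"
    using assms p_less_half by (intro mult_right_mono) (auto intro: mult_nonneg_nonneg)
  finally show ?thesis by (simp add: power2_eq_square)
qed

lemma adjacent_bounds_square:
  assumes "adjacent_bounds n x y" "0 \<le> x" "0 \<le> y"
  shows "p^2 * y \<le> (1 - p)^2 * x" "p^2 * x \<le> (1 - p)^2 * y"
  using assms by (auto simp: adjacent_bounds_def split: if_splits intro: square_weights_le)

definition doubling_const :: real where
  "doubling_const = 1 + 2 * ((1 - p) / p)^2"

lemma doubling_const_ge_1: "1 \<le> doubling_const"
  by (simp add: doubling_const_def)

lemma mass_neighbours_le:
  assumes "X < 2^g"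
  shows "mass g ((X + 1) mod 2^g) \<le> ((1 - p) / p)^2 * mass g X"
    and "mass g ((X + 2^g - 1) mod 2^g) \<le> ((1 - p) / p)^2 * mass g X"
proof -
  show "mass g ((X + 1) mod 2^g) \<le> ((1 - p) / p)^2 * mass g X"
    using adjacent_bounds_square(1)[OF adjacent_bounds_cyclic[OF assms] mass_nonneg mass_nonneg] p_pos
    by (simp add: power_divide field_simps)
  define Y where "Y = (X + 2^g - 1) mod 2^g"
  have "(Y + 1) mod 2^g = (X + 2^g) mod 2^g"
    by (simp add: Y_def mod_Suc_eq Suc_diff_1)
  then have "(Y + 1) mod 2^g = X" using assms by simp
  then show "mass g ((X + 2^g - 1) mod 2^g) \<le> ((1 - p) / p)^2 * mass g X"
    using adjacent_bounds_square(2)[OF adjacent_bounds_cyclic[of Y g] mass_nonneg mass_nonneg] p_pos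
    by (simp add: Y_def power_divide field_simps)
qed

lemma measure_circle_ball_le:
  assumes "0 \<le> x" "x < 1"
  shows "measure M {t. circle_dist (t - x) < 1 / 2^g} \<le> doubling_const * mass g (nat \<lfloor>2^g * x\<rfloor>)"
proof -
  define X where "X = nat \<lfloor>2^g * x\<rfloor>"
  let ?B = "{t. circle_dist (t - x) < 1 / 2^g}"
  let ?D = "\<lambda>j. dyadic g j"
  have "measure M ?B = measure M (?B \<inter> {0..<1})"
    by (rule measure_Int_unit[symmetric]) measurable
  also have "\<dots> \<le> measure M (?D X \<union> ?D ((X + 1) mod 2^g) \<union> ?D ((X + 2^g - 1) mod 2^g))"
    using circle_ball_subset_dyadic_neighbours[OF assms] unfolding X_def
    by (intro finite_measure_mono) auto
  also have "\<dots> \<le> mass g X + mass g ((X + 1) mod 2^g) + mass g ((X + 2^g - 1) mod 2^g)"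
    unfolding mass_def by (intro measure_Un_le[THEN order_trans] add_right_mono) simp_all
  also have "\<dots> \<le> doubling_const * mass g X"
    using mass_neighbours_le[of X g] dyadic_floor_index(1)[OF assms]
    by (simp add: X_def doubling_const_def algebra_simps)
  finally show ?thesis by (simp add: X_def)
qed

lemma measure_circle_ball_multiple_le:
  assumes J: "J < 2^G" "circle_dist (real J / 2^G - \<theta>) \<le> l/2"
    and l: "0 < l" "l \<le> 4 / 2^G"
  shows "p^(k + 3) * measure M {t. circle_dist (t - \<theta>) < 2^k * l} \<le> doubling_const * mass G J"
proof (cases "k + 3 \<le> G")
  case True
  define g where "g = G - (k + 3)"
  define x where "x = real J / 2^G"
  have G: "G = g + (k + 3)" using True by (simp add: g_def)
  have "real J < 2^G" using J(1) by (metis of_nat_less_iff of_nat_numeral of_nat_power)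
  then have x: "0 \<le> x" "x < 1" by (simp_all add: x_def)
  have "{t. circle_dist (t - \<theta>) < 2^k * l} \<subseteq> {t. circle_dist (t - x) < 1 / 2^g}"
    by (rule circle_ball_subset_dyadic_scale) (use J(2) l in \<open>simp_all add: x_def G\<close>)
  then have "measure M {t. circle_dist (t - \<theta>) < 2^k * l} \<le> measure M {t. circle_dist (t - x) < 1 / 2^g}"
    by (intro finite_measure_mono) measurable
  also have "\<dots> \<le> doubling_const * mass g (J div 2^(k + 3))"
    using measure_circle_ball_le[OF x, of g] floor_divide_of_nat_eq[of J "2^(k + 3)", where 'a=real]
    by (simp add: x_def G power_add)
  finally have "p^(k + 3) * measure M {t. circle_dist (t - \<theta>) < 2^k * l}
      \<le> doubling_const * (p^(k + 3) * mass g (J div 2^(k + 3)))"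
    using p_pos by (simp add: mult_left_mono mult.left_commute)
  also have "\<dots> \<le> doubling_const * mass G J"
    using mass_descendant_ge[of J g "k + 3"] J(1) doubling_const_ge_1 by (simp add: G)
  finally show ?thesis .
next
  case False
  have "p^(k + 3) * measure M {t. circle_dist (t - \<theta>) < 2^k * l} \<le> p^(k + 3)"
    using p_pos prob_le_1 by (simp add: mult_left_le)
  also have "\<dots> \<le> p^G" using False p_pos p_less_half by (simp add: power_decreasing)
  also have "\<dots> \<le> mass G J" using mass_ge[OF J(1)] .
  also have "\<dots> \<le> doubling_const * mass G J"
    using doubling_const_ge_1 mass_nonneg[of G J] by (simp add: mult_le_cancel_right1)
  finally show ?thesis .
qed

lemma mass_light_branch: "mass n (light_branch n) = p^n"
proof (induction n)
  case (Suc n)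
  then show ?case
    using mass_child[OF light_branch_less[of "Suc n"]] by simp
qed (simp add: mass_root)

lemma integrable_poisson_kernel:
  assumes "0 < l" "l \<le> 1"
  shows "integrable M (poisson_kernel l \<theta>)"
  by (rule integrable_const_bound[where B = "2 / l"])
     (use poisson_kernel_nonneg[OF assms] poisson_kernel_le[OF assms] in auto)

lemma poisson_zarc: "poisson M (zarc a l) = (\<integral>t. poisson_kernel l (a + l/2) t \<partial>M)"
  unfolding poisson_def poisson_integrand_zarc ..

lemma integrable_indicator_borel: "A \<in> sets borel \<Longrightarrow> integrable M (indicator A :: real \<Rightarrow> real)"
  by (simp add: integrable_indicator_iff emeasure_finite less_top[symmetric])

lemma integral_weighted_indicators:
  assumes "\<And>k. A k \<in> sets borel"
  shows "integrable M (\<lambda>t. \<Sum>k<n. w k * indicator (A k) t)"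
    and "(\<integral>t. (\<Sum>k<n. w k * indicator (A k) t) \<partial>M) = (\<Sum>k<n. w k * measure M (A k))"
  using assms integrable_indicator_borel by (auto simp: integral_sum)

end

section \<open>The case p > 1/4\<close>

lemma geometric_sum_le: "0 \<le> r \<Longrightarrow> r < 1 \<Longrightarrow> (\<Sum>k<n. r^k) \<le> 1 / (1 - r)"
  for r :: real
  by (simp add: sum_gp_strict divide_right_mono)

context sigma_p_measure
begin

lemma poisson_le_annuli:
  assumes l: "0 < l" "l \<le> 1" and N: "1/2 < 2^N * l"
  shows "poisson M (zarc a l)
    \<le> (\<Sum>k<Suc N. 4 / (4^k * l) * measure M {t. circle_dist (t - (a + l/2)) < 2^k * l})"
proof -
  have "poisson M (zarc a l)
    \<le> (\<integral>t. (\<Sum>k<Suc N. 4 / (4^k * l) * indicator {t. circle_dist (t - (a + l/2)) < 2^k * l} t) \<partial>M)"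
    unfolding poisson_zarc using poisson_kernel_le_annuli[OF l N] integrable_poisson_kernel[OF l]
    by (intro integral_mono integral_weighted_indicators(1)) auto
  also have "\<dots> = (\<Sum>k<Suc N. 4 / (4^k * l) * measure M {t. circle_dist (t - (a + l/2)) < 2^k * l})"
    by (rule integral_weighted_indicators(2)) measurable
  finally show ?thesis .
qed

lemma annuli_sum_le:
  assumes J: "J < 2^G" "l \<le> 4 / 2^G" "circle_dist (real J / 2^G - \<theta>) \<le> l/2" and l: "0 < l"
  shows "(\<Sum>k<n. 4 / (4^k * l) * measure M {t. circle_dist (t - \<theta>) < 2^k * l})
    \<le> 4 * doubling_const * mass G J / (l * p^3) * (\<Sum>k<n. (1/(4*p))^k)"
proof -
  let ?c = "4 * doubling_const * mass G J / (l * p^3)"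
  have "(\<Sum>k<n. 4 / (4^k * l) * measure M {t. circle_dist (t - \<theta>) < 2^k * l})
      \<le> (\<Sum>k<n. ?c * (1/(4*p))^k)"
  proof (rule sum_mono)
    fix k
    have "measure M {t. circle_dist (t - \<theta>) < 2^k * l} \<le> doubling_const * mass G J / p^(k + 3)"
      using measure_circle_ball_multiple_le[OF J(1,3) l J(2), of k] p_pos by (simp add: field_simps)
    then have "4 / (4^k * l) * measure M {t. circle_dist (t - \<theta>) < 2^k * l}
        \<le> 4 / (4^k * l) * (doubling_const * mass G J / p^(k + 3))"
      using l by (intro mult_left_mono) auto
    also have "\<dots> = ?c * (1/(4*p))^k"
      using p_pos l by (simp add: field_simps power_add power_mult_distrib)
    finally show "4 / (4^k * l) * measure M {t. circle_dist (t - \<theta>) < 2^k * l} \<le> ?c * (1/(4*p))^k" .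
  qed
  also have "\<dots> = ?c * (\<Sum>k<n. (1/(4*p))^k)" by (rule sum_distrib_left[symmetric])
  finally show ?thesis .
qed

lemma poisson_le_arc_ratio:
  assumes p: "1/4 < p" and l: "0 < l" "l \<le> 1"
  shows "poisson M (zarc a l) \<le> 4 * doubling_const / (p^3 * (1 - 1/(4*p))) * (measure M (arc a l) / l)"
proof -
  obtain G J where J: "J < 2^G" "l \<le> 4 / 2^G" "circle_dist (real J / 2^G - (a + l/2)) \<le> l/2"
    and sub: "dyadic G J \<subseteq> arc a l"
    using ex_dyadic_subset_arc[OF l] .
  obtain N where "1/(2*l) < 2^N" using real_arch_pow[of 2 "1/(2*l)"] by auto
  then have N: "1/2 < 2^N * l" using l by (simp add: field_simps)
  have r: "0 < 1/(4*p)" "1/(4*p) < 1" using p by (auto simp: field_simps)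
  have "mass G J \<le> measure M (arc a l)"
    unfolding mass_def using sub by (intro finite_measure_mono) (simp_all add: arc_def frac_def)
  have "poisson M (zarc a l)
      \<le> (\<Sum>k<Suc N. 4 / (4^k * l) * measure M {t. circle_dist (t - (a + l/2)) < 2^k * l})"
    by (rule poisson_le_annuli[OF l N])
  also have "\<dots> \<le> 4 * doubling_const * mass G J / (l * p^3) * (\<Sum>k<Suc N. (1/(4*p))^k)"
    by (rule annuli_sum_le[OF J l(1)])
  also have "\<dots> \<le> 4 * doubling_const * mass G J / (l * p^3) * (1 / (1 - 1/(4*p)))"
    using r geometric_sum_le[of "1/(4*p)" "Suc N"] doubling_const_ge_1 mass_nonneg[of G J] l p_pos
    by (intro mult_left_mono) auto
  also have "\<dots> = 4 * doubling_const / (p^3 * (1 - 1/(4*p))) * (mass G J / l)"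
    by simp
  also have "\<dots> \<le> 4 * doubling_const / (p^3 * (1 - 1/(4*p))) * (measure M (arc a l) / l)"
    using \<open>mass G J \<le> measure M (arc a l)\<close> r l p_pos doubling_const_ge_1
    by (intro mult_left_mono divide_right_mono) auto
  finally show ?thesis .
qed

lemma arc_ratio_bound_if_quarter_lt:
  assumes "1/4 < p"
  shows "\<exists>c>0. \<forall>a l. 0 < l \<and> l \<le> 1 \<longrightarrow> c * poisson M (zarc a l) \<le> measure M (arc a l) / l"
proof (intro exI[of _ "p^3 * (1 - 1/(4*p)) / (4 * doubling_const)"] conjI allI impI)
  have "0 < 1 - 1/(4*p)" using assms by (simp add: field_simps)
  then show "0 < p^3 * (1 - 1/(4*p)) / (4 * doubling_const)"
    using p_pos doubling_const_ge_1 by simp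
  fix a l :: real assume "0 < l \<and> l \<le> 1"
  then show "p^3 * (1 - 1/(4*p)) / (4 * doubling_const) * poisson M (zarc a l) \<le> measure M (arc a l) / l"
    using poisson_le_arc_ratio[OF assms] \<open>0 < 1 - 1/(4*p)\<close> p_pos doubling_const_ge_1
    by (simp add: field_simps)
qed

end

section \<open>The case p \<le> 1/4\<close>

lemma sum_nested_indicators_le:
  fixes A :: "nat \<Rightarrow> 'a set"
  assumes mono: "\<And>m k. m \<le> k \<Longrightarrow> A k \<subseteq> A m"
    and bound: "\<And>m. m \<le> n \<Longrightarrow> t \<in> A m \<Longrightarrow> 4^m \<le> B" and "0 \<le> B"
  shows "(\<Sum>m<Suc n. (4::real)^m * indicator (A m) t) \<le> 2 * B"
  using bound
proof (induction n)
  case 0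
  then show ?case using \<open>0 \<le> B\<close> by (cases "t \<in> A 0") auto
next
  case (Suc n)
  show ?case
  proof (cases "t \<in> A (Suc n)")
    case False
    then show ?thesis using Suc by simp
  next
    case True
    then have "t \<in> A m" if "m \<le> Suc n" for m using mono that by blast
    then have "(\<Sum>m<Suc (Suc n). (4::real)^m * indicator (A m) t) = (\<Sum>m<Suc (Suc n). 4^m)"
      by (intro sum.cong) auto
    also have "\<dots> = (4 * 4^Suc n - 1) / 3"
      by (simp add: sum_gp_strict field_simps)
    also have "\<dots> \<le> 2 * 4^Suc n"
      using zero_le_power[of "4::real" "Suc n"] by (simp add: field_simps)
    also have "\<dots> \<le> 2 * B" using Suc.prems[of "Suc n"] True by simp
    finally show ?thesis .
  qed
qed

context sigma_p_measure
begin

lemma poisson_light_branch_ge: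
  "(\<Sum>m<Suc n. (4 * p)^m) / (82 * 2^n)
     \<le> poisson M (zarc (real (light_branch n) / 2^n) (1 / 2^n))"
proof -
  let ?I = "\<lambda>m. dyadic m (light_branch m)"
  let ?P = "poisson_kernel (1 / 2^n) (real (light_branch n) / 2^n + (1 / 2^n) / 2)"
  have nested: "?I k \<subseteq> ?I m" if "m \<le> k" for m k
    using dyadic_subset_ancestor[of m "k - m" "light_branch k"] light_branch_ancestor[OF that] that
    by simp
  have "(\<Sum>m<Suc n. (4::real)^m * indicator (?I m) t) \<le> 2 * (41 * 2^n * ?P t)" for t
  proof (rule sum_nested_indicators_le)
    show "\<And>m k. m \<le> k \<Longrightarrow> ?I k \<subseteq> ?I m" by (rule nested)
    show "0 \<le> 41 * 2^n * ?P t" by (intro mult_nonneg_nonneg poisson_kernel_nonneg) simp_all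
  next
    fix m assume "m \<le> n" "t \<in> ?I m"
    then show "4^m \<le> 41 * 2^n * ?P t"
      using poisson_kernel_ge_on_ancestor[of m n t "light_branch n"] light_branch_ancestor[of m n]
      by (simp add: field_simps)
  qed
  then have "(\<integral>t. (\<Sum>m<Suc n. 4^m / (82 * 2^n) * indicator (?I m) t) \<partial>M) \<le> (\<integral>t. ?P t \<partial>M)"
    by (intro integral_mono integral_weighted_indicators(1) integrable_poisson_kernel)
       (auto simp: sum_divide_distrib[symmetric] field_simps simp del: sets_M)
  moreover have "(\<integral>t. (\<Sum>m<Suc n. 4^m / (82 * 2^n) * indicator (?I m) t) \<partial>M)
      = (\<Sum>m<Suc n. (4 * p)^m) / (82 * 2^n)"
    by (subst integral_weighted_indicators(2))
       (simp_all add: mass_light_branch[unfolded mass_def] sum_divide_distrib add_divide_distrib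
         power_mult_distrib del: sets_M)
  ultimately show ?thesis by (simp add: poisson_zarc)
qed

lemma poisson_light_branch_ge_linear:
  assumes "4 * p \<le> 1"
  shows "real (Suc n) * (2 * p)^n / 82 \<le> poisson M (zarc (real (light_branch n) / 2^n) (1 / 2^n))"
proof -
  have "of_nat (card {..<Suc n}) * (4 * p)^n \<le> (\<Sum>m<Suc n. (4 * p)^m)"
  proof (rule sum_bounded_below)
    fix m assume "m \<in> {..<Suc n}"
    then show "(4 * p)^n \<le> (4 * p)^m" using p_pos assms by (intro power_decreasing) auto
  qed
  then have sum_ge: "real (Suc n) * (4 * p)^n \<le> (\<Sum>m<Suc n. (4 * p)^m)" by simp
  have "(4::real)^n = 2^n * 2^n" by (simp flip: power_mult_distrib)
  then have "real (Suc n) * (2 * p)^n / 82 = real (Suc n) * (4 * p)^n / (82 * 2^n)"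
    by (simp add: power_mult_distrib)
  also have "\<dots> \<le> (\<Sum>m<Suc n. (4 * p)^m) / (82 * 2^n)"
    using sum_ge by (rule divide_right_mono) simp
  also have "\<dots> \<le> poisson M (zarc (real (light_branch n) / 2^n) (1 / 2^n))"
    by (rule poisson_light_branch_ge)
  finally show ?thesis .
qed

lemma quarter_lt_if_arc_ratio_bound:
  assumes c: "0 < c"
    and bound: "\<And>a l. 0 < l \<Longrightarrow> l \<le> 1 \<Longrightarrow> c * poisson M (zarc a l) \<le> measure M (arc a l) / l"
  shows "1/4 < p"
proof (rule ccontr)
  assume "\<not> 1/4 < p"
  obtain n :: nat where n: "82 / c < real n" using reals_Archimedean2 by blast
  define a where "a = real (light_branch n) / 2^n"
  have "measure M (arc a (1 / 2^n)) = p^n"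
    using mass_light_branch[of n] arc_dyadic[OF light_branch_less] by (simp add: a_def mass_def)
  then have "c * poisson M (zarc a (1 / 2^n)) \<le> (2 * p)^n"
    using bound[of "1 / 2^n" a] by (simp add: power_mult_distrib mult.commute)
  moreover have "c * (real (Suc n) * (2 * p)^n / 82) \<le> c * poisson M (zarc a (1 / 2^n))"
    using poisson_light_branch_ge_linear[of n] \<open>\<not> 1/4 < p\<close> c unfolding a_def
    by (intro mult_left_mono) auto
  ultimately have "c * (real (Suc n) * (2 * p)^n / 82) \<le> (2 * p)^n" by linarith
  then have "(c * real (Suc n) / 82) * (2 * p)^n \<le> 1 * (2 * p)^n" by simp
  then have "c * real (Suc n) / 82 \<le> 1"
    using p_pos by (simp only: mult_le_cancel_right_pos zero_less_power)
  then show False using n c by (simp add: field_simps)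
qed

end

theorem mainTheorem17:
  fixes p :: real and M :: "real measure"
  assumes "0 < p" and "p < 1 / 2" and "sigma_meas p M"
  shows "(\<exists>c > 0. \<forall>a l. 0 < l \<and> l \<le> 1 \<longrightarrow>
            measure M (arc a l) / l \<ge> c * poisson M (zarc a l))
         \<longleftrightarrow> p > 1 / 4"
proof -
  interpret sigma_p_measure p M using assms by unfold_locales
  show ?thesis
    using arc_ratio_bound_if_quarter_lt quarter_lt_if_arc_ratio_bound by blast
qed

end
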